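(* Let $N\ge 1$ and let $\mathcal{A}_N=\left\{\sigma_z^{(1)},\dots,\sigma_z^{(N)},\ \sum_{k=1}^{N}\sigma_x^{(k)},\ \sum_{1\le i<j\le N}\sigma_y^{(i)}\sigma_y^{(j)}\right\}$ (for $N=1$ the last sum is empty and is omitted). Then the smallest real vector space of $2^N\times 2^N$ matrices that contains $\mathcal{A}_N$ and is closed under the bracket $(X,Y)\mapsto i[X,Y]=i(XY-YX)$ is the space of all traceless Hermitian $2^N\times 2^N$ matrices, i.e. $\mathcal{A}_N$ generates $\mathfrak{su}(2^N)$ (in its Hermitian realization) by real linear combinations and iterated commutators. *)

theory Defs
  imports "Jordan_Normal_Form.Matrix" "HOL.Complex"
begin

definition pauli_x :: "complex mat" where
  "pauli_x = mat_of_rows_list 2 [[0, 1], [1, 0]]"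

definition pauli_y :: "complex mat" where
  "pauli_y = mat_of_rows_list 2 [[0, -\<i>], [\<i>, 0]]"

definition pauli_z :: "complex mat" where
  "pauli_z = mat_of_rows_list 2 [[1, 0], [0, -1]]"

definition kron :: "complex mat \<Rightarrow> complex mat \<Rightarrow> complex mat" where
  "kron A B = mat (dim_row A * dim_row B) (dim_col A * dim_col B)
     (\<lambda>(i, j). A $$ (i div dim_row B, j div dim_col B) * B $$ (i mod dim_row B, j mod dim_col B))"

definition site_op :: "nat \<Rightarrow> nat \<Rightarrow> complex mat \<Rightarrow> complex mat" where
  "site_op N k P = kron (1\<^sub>m (2 ^ (k - 1))) (kron P (1\<^sub>m (2 ^ (N - k))))"

definition sum_mats :: "nat \<Rightarrow> complex mat list \<Rightarrow> complex mat" where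
  "sum_mats n Ms = foldr (+) Ms (0\<^sub>m n n)"

definition gen_set :: "nat \<Rightarrow> complex mat set" where
  "gen_set N =
     {site_op N k pauli_z | k. 1 \<le> k \<and> k \<le> N}
     \<union> {sum_mats (2 ^ N) [site_op N k pauli_x. k \<leftarrow> [1..<N+1]]}
     \<union> (if N \<ge> 2 then
          {sum_mats (2 ^ N) [site_op N i pauli_y * site_op N j pauli_y.
                              i \<leftarrow> [1..<N+1], j \<leftarrow> [i+1..<N+1]]}
        else {})"

definition ibracket :: "complex mat \<Rightarrow> complex mat \<Rightarrow> complex mat" where
  "ibracket X Y = \<i> \<cdot>\<^sub>m (X * Y - Y * X)"

inductive_set lie_closure :: "nat \<Rightarrow> complex mat set \<Rightarrow> complex mat set"
  for n :: nat and S :: "complex mat set" where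
  gen: "X \<in> S \<Longrightarrow> X \<in> carrier_mat n n \<Longrightarrow> X \<in> lie_closure n S"
| zero: "0\<^sub>m n n \<in> lie_closure n S"
| add: "X \<in> lie_closure n S \<Longrightarrow> Y \<in> lie_closure n S \<Longrightarrow> X + Y \<in> lie_closure n S"
| smult: "X \<in> lie_closure n S \<Longrightarrow> complex_of_real r \<cdot>\<^sub>m X \<in> lie_closure n S"
| bracket: "X \<in> lie_closure n S \<Longrightarrow> Y \<in> lie_closure n S \<Longrightarrow> ibracket X Y \<in> lie_closure n S"

definition mat_trace :: "complex mat \<Rightarrow> complex" where
  "mat_trace M = (\<Sum>i<dim_row M. M $$ (i, i))"

definition hermitian_mat :: "complex mat \<Rightarrow> bool" where
  "hermitian_mat M \<longleftrightarrow> dim_row M = dim_col M \<and>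
     (\<forall>i<dim_row M. \<forall>j<dim_col M. M $$ (i, j) = cnj (M $$ (j, i)))"

definition traceless_hermitian :: "nat \<Rightarrow> complex mat set" where
  "traceless_hermitian n = {M \<in> carrier_mat n n. hermitian_mat M \<and> mat_trace M = 0}"

end

theory Submission
  imports Defs
begin

text \<open>Every Pauli string is a monomial matrix: row \<open>i\<close> has a single entry, in the column obtained
  from \<open>i\<close> by flipping some bits. Products and brackets of monomial matrices are again monomial, so
  all computations reduce to bookkeeping on indices.

  From \<open>Z\<^sub>b\<close> and the transverse field \<open>\<Sum>X\<^sub>k\<close> one gets \<open>Y\<^sub>b\<close> and then \<open>X\<^sub>b\<close>. For \<open>a \<noteq> c\<close> the double bracket
  of \<open>Z\<^sub>c\<close>, \<open>Z\<^sub>a\<close> and the coupling \<open>\<Sum>Y\<^sub>iY\<^sub>j\<close> isolates \<open>X\<^sub>aX\<^sub>c\<close>, which with \<open>Y\<^sub>a\<close> and \<open>Y\<^sub>c\<close> yields \<open>Z\<^sub>aZ\<^sub>c\<close>.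
  Brackets with \<open>Z\<^sub>bZ\<^sub>m\<close> multiply \<open>X\<^sub>b\<close> and \<open>Y\<^sub>b\<close> by the projections \<open>(1 \<plusminus> Z\<^sub>m)/2\<close>; doing this for all
  \<open>m \<noteq> b\<close> produces \<open>E\<^sub>p\<^sub>q + E\<^sub>q\<^sub>p\<close> and \<open>i E\<^sub>p\<^sub>q - i E\<^sub>q\<^sub>p\<close> for indices \<open>p\<close>, \<open>q\<close> differing in one bit. Brackets along
  paths in the hypercube give them for all \<open>p \<noteq> q\<close>, and then \<open>E\<^sub>p\<^sub>p - E\<^sub>q\<^sub>q\<close>; these span the traceless
  Hermitian matrices. Conversely, traceless Hermitian matrices are closed under \<open>i[X, Y]\<close>.\<close>

lemma bit_flip_bit_nat: "bit (flip_bit b (i::nat)) m = (if m = b then \<not> bit i m else bit i m)"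
  by (auto simp: bit_flip_bit_iff)

lemma bit_less_of_less_power: "(i::nat) < 2 ^ N \<Longrightarrow> bit i m \<Longrightarrow> m < N"
  by (metis bit_take_bit_iff take_bit_nat_eq_self_iff)

lemma flip_bit_less_power: "(i::nat) < 2 ^ N \<Longrightarrow> b < N \<Longrightarrow> flip_bit b i < 2 ^ N"
  by (metis not_le take_bit_flip_bit_eq take_bit_nat_eq_self_iff)

lemma flip_bit_flip_bit [simp]: "flip_bit b (flip_bit b (i::nat)) = i"
  by (rule bit_eqI) (auto simp: bit_flip_bit_nat)

lemma flip_bit_commute: "flip_bit a (flip_bit c (i::nat)) = flip_bit c (flip_bit a i)"
  by (rule bit_eqI) (auto simp: bit_flip_bit_nat)

lemma flip_bit_eq_flip_bit_iff [simp]: "flip_bit a (i::nat) = flip_bit b i \<longleftrightarrow> a = b"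
  by (metis bit_flip_bit_nat)

lemma flip_bit_neq [simp]: "flip_bit b (i::nat) \<noteq> i"
  by (metis bit_flip_bit_nat)

lemma flip_bit_flip_bit_neq: "a \<noteq> c \<Longrightarrow> flip_bit a (flip_bit c (i::nat)) \<noteq> i"
  by (metis bit_flip_bit_nat)

lemma eq_flip_bit_iff:
  "j = flip_bit b (i::nat) \<longleftrightarrow> (\<forall>m. m \<noteq> b \<longrightarrow> bit i m = bit j m) \<and> bit i b \<noteq> bit j b"
proof -
  have "j = flip_bit b i \<longleftrightarrow> (\<forall>m. bit j m = (if m = b then \<not> bit i m else bit i m))"
    by (simp add: bit_eq_iff bit_flip_bit_nat)
  then show ?thesis by metis
qed

lemma eq_iff_bits_eq_except:
  "j = (i::nat) \<longleftrightarrow> (\<forall>m. m \<noteq> b \<longrightarrow> bit i m = bit j m) \<and> bit i b = bit j b"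
  by (metis bit_eq_iff)

section \<open>Monomial matrices\<close>

definition mono_mat :: "nat \<Rightarrow> (nat \<Rightarrow> nat) \<Rightarrow> (nat \<Rightarrow> complex) \<Rightarrow> complex mat" where
  "mono_mat n g a = mat n n (\<lambda>(i, j). if j = g i then a i else 0)"

lemma mono_mat_carrier [simp]: "mono_mat n g a \<in> carrier_mat n n"
  and dim_mono_mat [simp]: "dim_row (mono_mat n g a) = n" "dim_col (mono_mat n g a) = n"
  by (simp_all add: mono_mat_def)

lemma index_mono_mat [simp]:
  "i < n \<Longrightarrow> j < n \<Longrightarrow> mono_mat n g a $$ (i, j) = (if j = g i then a i else 0)"
  by (simp add: mono_mat_def)

lemma mono_mat_cong:
  assumes "\<And>i. i < n \<Longrightarrow> a i = a' i" and "\<And>i. i < n \<Longrightarrow> a i \<noteq> 0 \<Longrightarrow> g i = g' i"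
  shows "mono_mat n g a = mono_mat n g' a'"
  by (rule eq_matI) (use assms in \<open>auto; metis\<close>)+

lemma mono_mat_mult:
  assumes "\<And>i. i < n \<Longrightarrow> a i \<noteq> 0 \<Longrightarrow> g i < n"
  shows "mono_mat n g a * mono_mat n h b = mono_mat n (h \<circ> g) (\<lambda>i. a i * b (g i))"
proof (rule eq_matI)
  fix i j assume "i < dim_row (mono_mat n (h \<circ> g) (\<lambda>i. a i * b (g i)))"
    and "j < dim_col (mono_mat n (h \<circ> g) (\<lambda>i. a i * b (g i)))"
  then have i: "i < n" and j: "j < n" by auto
  have "(mono_mat n g a * mono_mat n h b) $$ (i, j)
      = (\<Sum>l<n. mono_mat n g a $$ (i, l) * mono_mat n h b $$ (l, j))"
    using i j by (simp add: scalar_prod_def atLeast0LessThan)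
  also have "\<dots> = (\<Sum>l<n. if l = g i then a i * (if j = h l then b l else 0) else 0)"
    using i j by (intro sum.cong) auto
  also have "\<dots> = mono_mat n (h \<circ> g) (\<lambda>i. a i * b (g i)) $$ (i, j)"
    using i j assms[of i] by auto
  finally show "(mono_mat n g a * mono_mat n h b) $$ (i, j) = \<dots>" .
qed auto

lemma mono_mat_add:
  assumes "\<And>i. i < n \<Longrightarrow> a i \<noteq> 0 \<Longrightarrow> g i = k i" and "\<And>i. i < n \<Longrightarrow> b i \<noteq> 0 \<Longrightarrow> h i = k i"
  shows "mono_mat n g a + mono_mat n h b = mono_mat n k (\<lambda>i. a i + b i)"
  by (rule eq_matI) (use assms in \<open>auto; metis add.right_neutral add.left_neutral\<close>)+

lemma mono_mat_diff:
  assumes "\<And>i. i < n \<Longrightarrow> a i \<noteq> 0 \<Longrightarrow> g i = k i" and "\<And>i. i < n \<Longrightarrow> b i \<noteq> 0 \<Longrightarrow> h i = k i"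
  shows "mono_mat n g a - mono_mat n h b = mono_mat n k (\<lambda>i. a i - b i)"
  by (rule eq_matI) (use assms in \<open>auto; metis\<close>)+

lemma smult_mono_mat: "c \<cdot>\<^sub>m mono_mat n g a = mono_mat n g (\<lambda>i. c * a i)"
  by (rule eq_matI) auto

lemma ibracket_mono_mat:
  assumes "\<And>i. i < n \<Longrightarrow> a i \<noteq> 0 \<Longrightarrow> g i < n" and "\<And>i. i < n \<Longrightarrow> b i \<noteq> 0 \<Longrightarrow> h i < n"
    and "\<And>i. i < n \<Longrightarrow> a i * b (g i) \<noteq> 0 \<Longrightarrow> h (g i) = k i"
    and "\<And>i. i < n \<Longrightarrow> b i * a (h i) \<noteq> 0 \<Longrightarrow> g (h i) = k i"
  shows "ibracket (mono_mat n g a) (mono_mat n h b)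
    = mono_mat n k (\<lambda>i. \<i> * (a i * b (g i) - b i * a (h i)))"
proof -
  have "ibracket (mono_mat n g a) (mono_mat n h b)
      = \<i> \<cdot>\<^sub>m (mono_mat n (h \<circ> g) (\<lambda>i. a i * b (g i)) - mono_mat n (g \<circ> h) (\<lambda>i. b i * a (h i)))"
    unfolding ibracket_def by (simp add: mono_mat_mult assms(1,2))
  also have "\<dots> = \<i> \<cdot>\<^sub>m mono_mat n k (\<lambda>i. a i * b (g i) - b i * a (h i))"
    by (subst mono_mat_diff[where k = k]) (use assms(3,4) in auto)
  finally show ?thesis by (simp add: smult_mono_mat)
qed

lemma ibracket_diag_mat:
  assumes "A \<in> carrier_mat n n"
  shows "ibracket (mono_mat n id d) A = mat n n (\<lambda>(i, j). \<i> * (d i - d j) * A $$ (i, j))"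
proof -
  have "mono_mat n id d * A = mat n n (\<lambda>(i, j). d i * A $$ (i, j))"
    using assms by (auto simp: scalar_prod_def atLeast0LessThan
        if_distrib[of "\<lambda>x. x * _"] cong: if_cong)
  moreover have "A * mono_mat n id d = mat n n (\<lambda>(i, j). A $$ (i, j) * d j)"
    using assms by (auto simp: scalar_prod_def atLeast0LessThan
        if_distrib[of "\<lambda>x. _ * x"] cong: if_cong)
  ultimately show ?thesis
    unfolding ibracket_def by (auto simp: algebra_simps)
qed

lemma lie_closure_carrier: "X \<in> lie_closure n S \<Longrightarrow> X \<in> carrier_mat n n"
  by (induction rule: lie_closure.induct) (auto simp: ibracket_def)

lemma lie_closure_sum:
  assumes "finite T" and "\<And>t. t \<in> T \<Longrightarrow> G t \<in> lie_closure n S"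
  shows "mat n n (\<lambda>(i, j). \<Sum>t\<in>T. G t $$ (i, j)) \<in> lie_closure n S"
  using assms
proof (induction T rule: finite_induct)
  case empty
  have "mat n n (\<lambda>(i, j). \<Sum>t\<in>{}. G t $$ (i, j)) = 0\<^sub>m n n" by auto
  then show ?case by (metis lie_closure.zero)
next
  case (insert x T)
  have Gx: "G x \<in> lie_closure n S"
    using insert.prems by blast
  then have "mat n n (\<lambda>(i, j). \<Sum>t\<in>insert x T. G t $$ (i, j))
      = G x + mat n n (\<lambda>(i, j). \<Sum>t\<in>T. G t $$ (i, j))"
    using insert.hyps lie_closure_carrier by auto
  moreover have "mat n n (\<lambda>(i, j). \<Sum>t\<in>T. G t $$ (i, j)) \<in> lie_closure n S"
    using insert by blast
  ultimately show ?case
    using Gx by (metis lie_closure.add)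
qed

lemma mono_mat_lie_closure_cong:
  assumes "mono_mat n g a \<in> lie_closure n S"
    and "\<And>i. i < n \<Longrightarrow> a i = a' i" and "\<And>i. i < n \<Longrightarrow> a i \<noteq> 0 \<Longrightarrow> g i = g' i"
  shows "mono_mat n g' a' \<in> lie_closure n S"
  using assms mono_mat_cong by metis

lemma mono_mat_lie_closure_scaleR:
  assumes "mono_mat n g a \<in> lie_closure n S"
  shows "mono_mat n g (\<lambda>i. complex_of_real r * a i) \<in> lie_closure n S"
  using lie_closure.smult[OF assms, of r] by (simp add: smult_mono_mat)

lemma mono_mat_lie_closure_lincomb:
  assumes "mono_mat n g a \<in> lie_closure n S" and "mono_mat n g b \<in> lie_closure n S"
    and "\<And>i. i < n \<Longrightarrow> c i = complex_of_real r * a i + complex_of_real s * b i"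
  shows "mono_mat n g c \<in> lie_closure n S"
proof -
  have "mono_mat n g (\<lambda>i. complex_of_real r * a i) + mono_mat n g (\<lambda>i. complex_of_real s * b i)
      \<in> lie_closure n S"
    by (intro lie_closure.add mono_mat_lie_closure_scaleR assms)
  also have "mono_mat n g (\<lambda>i. complex_of_real r * a i) + mono_mat n g (\<lambda>i. complex_of_real s * b i)
      = mono_mat n g c"
    by (subst mono_mat_add[where k = g]) (auto intro!: mono_mat_cong simp: assms(3))
  finally show ?thesis .
qed

lemma mono_mat_lie_closure_ibracket:
  assumes "mono_mat n g a \<in> lie_closure n S" and "mono_mat n h b \<in> lie_closure n S"
    and "\<And>i. i < n \<Longrightarrow> a i \<noteq> 0 \<Longrightarrow> g i < n" and "\<And>i. i < n \<Longrightarrow> b i \<noteq> 0 \<Longrightarrow> h i < n"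
    and "\<And>i. i < n \<Longrightarrow> a i * b (g i) \<noteq> 0 \<Longrightarrow> h (g i) = k i"
    and "\<And>i. i < n \<Longrightarrow> b i * a (h i) \<noteq> 0 \<Longrightarrow> g (h i) = k i"
    and "\<And>i. i < n \<Longrightarrow> c i = complex_of_real r * (\<i> * (a i * b (g i) - b i * a (h i)))"
  shows "mono_mat n k c \<in> lie_closure n S"
proof -
  have "ibracket (mono_mat n g a) (mono_mat n h b) \<in> lie_closure n S"
    by (intro lie_closure.bracket assms(1,2))
  then have "mono_mat n k (\<lambda>i. \<i> * (a i * b (g i) - b i * a (h i))) \<in> lie_closure n S"
    by (subst (asm) ibracket_mono_mat[where k = k]) (use assms(3-6) in auto)
  from mono_mat_lie_closure_scaleR[OF this, of r] show ?thesis
    by (rule mono_mat_lie_closure_cong) (auto simp: assms(7))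
qed

section \<open>Pauli operators as monomial matrices\<close>

lemma i_mult_mult_i [simp]: "\<i> * (z * \<i>) = - z"
  by (metis complex_i_mult_minus mult.commute)

definition z_sign :: "nat \<Rightarrow> nat \<Rightarrow> complex" where
  "z_sign b i = (if bit i b then -1 else 1)"

definition y_phase :: "nat \<Rightarrow> nat \<Rightarrow> complex" where
  "y_phase b i = (if bit i b then \<i> else -\<i>)"

text \<open>Since the first Kronecker factor is the
  most significant one, qubit \<open>k\<close> of \<^const>\<open>site_op\<close> is bit \<open>N - k\<close>.\<close>

definition Z_op :: "nat \<Rightarrow> nat \<Rightarrow> complex mat" where
  "Z_op N b = mono_mat (2 ^ N) id (z_sign b)"

definition X_op :: "nat \<Rightarrow> nat \<Rightarrow> complex mat" where
  "X_op N b = mono_mat (2 ^ N) (flip_bit b) (\<lambda>_. 1)"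

definition Y_op :: "nat \<Rightarrow> nat \<Rightarrow> complex mat" where
  "Y_op N b = mono_mat (2 ^ N) (flip_bit b) (y_phase b)"

lemma z_sign_flip_bit: "z_sign b (flip_bit c i) = (if c = b then - z_sign b i else z_sign b i)"
  by (auto simp: z_sign_def bit_flip_bit_nat)

lemma y_phase_flip_bit: "y_phase b (flip_bit c i) = (if c = b then - y_phase b i else y_phase b i)"
  by (auto simp: y_phase_def bit_flip_bit_nat)

lemma i_mult_y_phase: "\<i> * y_phase b i = z_sign b i"
  by (simp add: y_phase_def z_sign_def)

lemma div_mod_power_eq_iff_bits_eq_except:
  "(i::nat) div 2 ^ Suc b = j div 2 ^ Suc b \<and> i mod 2 ^ b = j mod 2 ^ b
    \<longleftrightarrow> (\<forall>m. m \<noteq> b \<longrightarrow> bit i m = bit j m)"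
proof -
  have "i div 2 ^ Suc b = j div 2 ^ Suc b \<longleftrightarrow> drop_bit (Suc b) i = drop_bit (Suc b) j"
    by (simp add: drop_bit_eq_div)
  also have "\<dots> \<longleftrightarrow> (\<forall>m. bit i (Suc b + m) = bit j (Suc b + m))"
    by (simp add: bit_eq_iff bit_drop_bit_eq)
  finally have "i div 2 ^ Suc b = j div 2 ^ Suc b \<longleftrightarrow> (\<forall>m. bit i (Suc b + m) = bit j (Suc b + m))" .
  moreover have "i mod 2 ^ b = j mod 2 ^ b \<longleftrightarrow> (\<forall>m<b. bit i m = bit j m)"
    by (auto simp: bit_eq_iff bit_take_bit_iff simp flip: take_bit_eq_mod)
  moreover have "(\<forall>m. m \<noteq> b \<longrightarrow> bit i m = bit j m)
      \<longleftrightarrow> (\<forall>m. bit i (Suc b + m) = bit j (Suc b + m)) \<and> (\<forall>m<b. bit i m = bit j m)"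
    by (metis add_Suc less_iff_Suc_add linorder_neqE_nat less_not_refl2)
  ultimately show ?thesis by blast
qed

lemma mod_double_power_div_power: "(i::nat) mod (2 * 2 ^ b) div 2 ^ b = of_bool (bit i b)"
proof -
  have "i mod (2 ^ b * 2) = 2 ^ b * (i div 2 ^ b mod 2) + i mod 2 ^ b"
    by (rule mod_mult2_eq)
  then show ?thesis
    by (simp add: mult.commute bit_iff_odd odd_iff_mod_2_eq_one)
qed

lemma index_site_op:
  assumes "1 \<le> k" "k \<le> N" "P \<in> carrier_mat 2 2" "i < 2 ^ N" "j < 2 ^ N"
  shows "site_op N k P $$ (i, j) = (if \<forall>m. m \<noteq> N - k \<longrightarrow> bit i m = bit j m
    then P $$ (of_bool (bit i (N - k)), of_bool (bit j (N - k))) else 0)"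
proof -
  define b where "b = N - k"
  define m1 where "m1 = (2::nat) ^ (k - Suc 0)"
  define m2 where "m2 = (2::nat) ^ b"
  have "m1 * (2 * m2) = 2 ^ N"
    using assms by (simp add: m1_def m2_def b_def flip: power_Suc power_add)
  then have i: "i < m1 * (2 * m2)" and j: "j < m1 * (2 * m2)"
    using assms by auto
  have m2: "m2 > 0"
    by (simp add: m2_def)
  have "i div (2 * m2) < m1" "j div (2 * m2) < m1"
    using i j by (auto simp: less_mult_imp_div_less mult.commute)
  moreover have "i mod (2 * m2) div m2 < 2" "j mod (2 * m2) div m2 < 2"
    using m2 by (auto simp: less_mult_imp_div_less)
  moreover have "i mod (2 * m2) mod m2 = i mod m2" "j mod (2 * m2) mod m2 = j mod m2"
    by (auto simp: mod_mod_cancel)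
  ultimately have "site_op N k P $$ (i, j)
      = (if i div (2 * m2) = j div (2 * m2) then 1 else 0)
        * (P $$ (i mod (2 * m2) div m2, j mod (2 * m2) div m2)
        * (if i mod m2 = j mod m2 then 1 else 0))"
    unfolding site_op_def kron_def using assms i j m2
    by (simp add: m1_def[symmetric] m2_def[symmetric] b_def[symmetric])
  also have "\<dots> = (if i div (2 * m2) = j div (2 * m2) \<and> i mod m2 = j mod m2
      then P $$ (of_bool (bit i b), of_bool (bit j b)) else 0)"
    by (simp add: m2_def mod_double_power_div_power)
  also have "\<dots> = (if \<forall>m. m \<noteq> b \<longrightarrow> bit i m = bit j m
      then P $$ (of_bool (bit i b), of_bool (bit j b)) else 0)"
    using div_mod_power_eq_iff_bits_eq_except[of i b j] by (simp add: m2_def)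
  finally show ?thesis
    unfolding b_def .
qed

lemma site_op_carrier:
  "1 \<le> k \<Longrightarrow> k \<le> N \<Longrightarrow> P \<in> carrier_mat 2 2 \<Longrightarrow> site_op N k P \<in> carrier_mat (2 ^ N) (2 ^ N)"
  by (auto simp: site_op_def kron_def simp flip: power_Suc power_add)

lemma pauli_carrier: "pauli_x \<in> carrier_mat 2 2" "pauli_y \<in> carrier_mat 2 2" "pauli_z \<in> carrier_mat 2 2"
  by (auto simp: pauli_x_def pauli_y_def pauli_z_def mat_of_rows_list_def)

lemma index_pauli_of_bool:
  "pauli_x $$ (of_bool x, of_bool y) = (if x \<noteq> y then 1 else 0)"
  "pauli_y $$ (of_bool x, of_bool y) = (if x \<noteq> y then (if x then \<i> else -\<i>) else 0)"
  "pauli_z $$ (of_bool x, of_bool y) = (if x = y then (if x then -1 else 1) else 0)"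
  by (cases x; cases y; simp add: pauli_x_def pauli_y_def pauli_z_def mat_of_rows_list_def)+

lemma site_op_pauli_x:
  assumes "1 \<le> k" "k \<le> N"
  shows "site_op N k pauli_x = X_op N (N - k)"
proof (rule eq_matI)
  fix i j assume "i < dim_row (X_op N (N - k))" "j < dim_col (X_op N (N - k))"
  then have "i < 2 ^ N" "j < 2 ^ N"
    by (auto simp: X_op_def)
  with assms show "site_op N k pauli_x $$ (i, j) = X_op N (N - k) $$ (i, j)"
    using eq_flip_bit_iff[of j "N - k" i]
    by (auto simp: index_site_op pauli_carrier index_pauli_of_bool X_op_def)
qed (use site_op_carrier[OF assms pauli_carrier(1)] in \<open>auto simp: X_op_def\<close>)

lemma site_op_pauli_y:
  assumes "1 \<le> k" "k \<le> N"
  shows "site_op N k pauli_y = Y_op N (N - k)"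
proof (rule eq_matI)
  fix i j assume "i < dim_row (Y_op N (N - k))" "j < dim_col (Y_op N (N - k))"
  then have "i < 2 ^ N" "j < 2 ^ N"
    by (auto simp: Y_op_def)
  with assms show "site_op N k pauli_y $$ (i, j) = Y_op N (N - k) $$ (i, j)"
    using eq_flip_bit_iff[of j "N - k" i]
    by (auto simp: index_site_op pauli_carrier index_pauli_of_bool Y_op_def y_phase_def)
qed (use site_op_carrier[OF assms pauli_carrier(2)] in \<open>auto simp: Y_op_def\<close>)

lemma site_op_pauli_z:
  assumes "1 \<le> k" "k \<le> N"
  shows "site_op N k pauli_z = Z_op N (N - k)"
proof (rule eq_matI)
  fix i j assume "i < dim_row (Z_op N (N - k))" "j < dim_col (Z_op N (N - k))"
  then have "i < 2 ^ N" "j < 2 ^ N"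
    by (auto simp: Z_op_def)
  with assms show "site_op N k pauli_z $$ (i, j) = Z_op N (N - k) $$ (i, j)"
    using eq_iff_bits_eq_except[of j i "N - k"]
    by (auto simp: index_site_op pauli_carrier index_pauli_of_bool Z_op_def z_sign_def)
qed (use site_op_carrier[OF assms pauli_carrier(3)] in \<open>auto simp: Z_op_def\<close>)

lemma sum_list_concat: "sum_list (concat xss) = sum_list (map sum_list (xss :: 'a::monoid_add list list))"
  by (induction xss) auto

lemma sum_qubits_eq_sum_bits: "(\<Sum>k\<in>{1..<N + 1}. f (N - k)) = (\<Sum>b<N. f (b::nat))"
  by (rule sum.reindex_bij_witness[where i = "\<lambda>b. N - b" and j = "\<lambda>k. N - k"]) auto

lemma sum_qubit_pairs_eq_sum_bit_pairs:
  "(\<Sum>k\<in>{1..<N + 1}. \<Sum>l\<in>{k + 1..<N + 1}. f (N - k) (N - l))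
    = (\<Sum>(a, c)\<in>{(a, c). c < a \<and> a < N}. f a (c::nat))"
proof -
  have "(\<Sum>k\<in>{1..<N + 1}. \<Sum>l\<in>{k + 1..<N + 1}. f (N - k) (N - l))
      = (\<Sum>(k, l)\<in>(SIGMA k:{1..<N + 1}. {k + 1..<N + 1}). f (N - k) (N - l))"
    by (rule sum.Sigma) auto
  also have "\<dots> = (\<Sum>(a, c)\<in>{(a, c). c < a \<and> a < N}. f a c)"
    by (rule sum.reindex_bij_witness[where i = "\<lambda>(a, c). (N - a, N - c)" and j = "\<lambda>(k, l). (N - k, N - l)"])
      auto
  finally show ?thesis .
qed

lemma sum_mats_carrier:
  "(\<And>M. M \<in> set Ms \<Longrightarrow> M \<in> carrier_mat n n) \<Longrightarrow> sum_mats n Ms \<in> carrier_mat n n"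
  by (induction Ms) (auto simp: sum_mats_def)

lemma index_sum_mats:
  "(\<And>M. M \<in> set Ms \<Longrightarrow> M \<in> carrier_mat n n) \<Longrightarrow> i < n \<Longrightarrow> j < n \<Longrightarrow>
    sum_mats n Ms $$ (i, j) = (\<Sum>M\<leftarrow>Ms. M $$ (i, j))"
proof (induction Ms)
  case (Cons M Ms)
  then have "sum_mats n Ms \<in> carrier_mat n n"
    by (intro sum_mats_carrier) auto
  then show ?case
    using Cons by (auto simp: sum_mats_def)
qed (simp add: sum_mats_def)

definition transverse_field :: "nat \<Rightarrow> complex mat" where
  "transverse_field N = sum_mats (2 ^ N) [site_op N k pauli_x. k \<leftarrow> [1..<N+1]]"

definition yy_coupling :: "nat \<Rightarrow> complex mat" where
  "yy_coupling N = sum_mats (2 ^ N) [site_op N i pauli_y * site_op N j pauli_y.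
     i \<leftarrow> [1..<N+1], j \<leftarrow> [i+1..<N+1]]"

lemma gen_set_eq:
  "gen_set N = {Z_op N b | b. b < N} \<union> {transverse_field N} \<union> (if N \<ge> 2 then {yy_coupling N} else {})"
proof -
  have "{site_op N k pauli_z | k. 1 \<le> k \<and> k \<le> N} = {Z_op N b | b. b < N}"
  proof (intro equalityI subsetI)
    fix X assume "X \<in> {site_op N k pauli_z | k. 1 \<le> k \<and> k \<le> N}"
    then show "X \<in> {Z_op N b | b. b < N}"
      by (force simp: site_op_pauli_z)
  next
    fix X assume "X \<in> {Z_op N b | b. b < N}"
    then obtain b where "b < N" "X = Z_op N b" by blast
    then show "X \<in> {site_op N k pauli_z | k. 1 \<le> k \<and> k \<le> N}"
      by (intro CollectI exI[where x = "N - b"]) (simp add: site_op_pauli_z)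
  qed
  then show ?thesis
    unfolding gen_set_def transverse_field_def yy_coupling_def by simp
qed

lemma transverse_field_eq: "transverse_field N = sum_mats (2 ^ N) [X_op N (N - k). k \<leftarrow> [1..<N+1]]"
  unfolding transverse_field_def by (intro arg_cong[where f = "sum_mats (2 ^ N)"] map_cong) (auto simp: site_op_pauli_x)

lemma yy_coupling_eq:
  "yy_coupling N = sum_mats (2 ^ N) [Y_op N (N - k) * Y_op N (N - l). k \<leftarrow> [1..<N+1], l \<leftarrow> [k+1..<N+1]]"
  unfolding yy_coupling_def
  by (intro arg_cong[where f = "sum_mats (2 ^ N)"] arg_cong[where f = concat] map_cong refl)
    (auto simp: site_op_pauli_y)

lemma Y_op_mult_Y_op:
  "a < N \<Longrightarrow> Y_op N a * Y_op N c
    = mono_mat (2 ^ N) (flip_bit c \<circ> flip_bit a) (\<lambda>i. y_phase a i * y_phase c (flip_bit a i))"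
  unfolding Y_op_def by (rule mono_mat_mult) (auto simp: flip_bit_less_power)

lemma transverse_field_carrier: "transverse_field N \<in> carrier_mat (2 ^ N) (2 ^ N)"
  unfolding transverse_field_eq by (rule sum_mats_carrier) (auto simp: X_op_def)

lemma yy_coupling_carrier: "yy_coupling N \<in> carrier_mat (2 ^ N) (2 ^ N)"
  unfolding yy_coupling_eq by (rule sum_mats_carrier) (auto simp: Y_op_def)

lemma index_transverse_field:
  assumes "i < 2 ^ N" "j < 2 ^ N"
  shows "transverse_field N $$ (i, j) = (\<Sum>b<N. X_op N b $$ (i, j))"
proof -
  have "transverse_field N $$ (i, j) = (\<Sum>k\<leftarrow>[1..<N+1]. X_op N (N - k) $$ (i, j))"
    unfolding transverse_field_eq using assms
    by (subst index_sum_mats) (auto simp: X_op_def comp_def)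
  also have "\<dots> = (\<Sum>k\<in>{1..<N+1}. X_op N (N - k) $$ (i, j))"
    by (simp only: interv_sum_list_conv_sum_set_nat set_upt)
  finally show ?thesis
    by (simp only: sum_qubits_eq_sum_bits[where f = "\<lambda>b. X_op N b $$ (i, j)"])
qed

lemma index_yy_coupling:
  assumes "i < 2 ^ N" "j < 2 ^ N"
  shows "yy_coupling N $$ (i, j) = (\<Sum>(a, c)\<in>{(a, c). c < a \<and> a < N}. (Y_op N a * Y_op N c) $$ (i, j))"
proof -
  have "yy_coupling N $$ (i, j)
      = (\<Sum>k\<leftarrow>[1..<N+1]. \<Sum>l\<leftarrow>[k+1..<N+1]. (Y_op N (N - k) * Y_op N (N - l)) $$ (i, j))"
    unfolding yy_coupling_eq using assms
    by (subst index_sum_mats) (auto simp: Y_op_def sum_list_concat map_concat comp_def)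
  also have "\<dots> = (\<Sum>k\<in>{1..<N+1}. \<Sum>l\<in>{k+1..<N+1}. (Y_op N (N - k) * Y_op N (N - l)) $$ (i, j))"
    by (simp only: interv_sum_list_conv_sum_set_nat set_upt)
  finally show ?thesis
    by (simp only: sum_qubit_pairs_eq_sum_bit_pairs[where f = "\<lambda>a c. (Y_op N a * Y_op N c) $$ (i, j)"])
qed

section \<open>The Lie closure consists of traceless Hermitian matrices\<close>

lemma traceless_hermitian_iff:
  "M \<in> traceless_hermitian n \<longleftrightarrow> M \<in> carrier_mat n n
    \<and> (\<forall>i<n. \<forall>j<n. M $$ (i, j) = cnj (M $$ (j, i))) \<and> (\<Sum>i<n. M $$ (i, i)) = 0"
proof (cases "M \<in> carrier_mat n n")
  case True
  then have dims: "dim_row M = n" "dim_col M = n"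
    by auto
  show ?thesis
    unfolding traceless_hermitian_def hermitian_mat_def mat_trace_def dims using True by simp
qed (simp add: traceless_hermitian_def)

lemma traceless_hermitianD:
  assumes "M \<in> traceless_hermitian n"
  shows "M \<in> carrier_mat n n" and "\<And>i j. i < n \<Longrightarrow> j < n \<Longrightarrow> cnj (M $$ (j, i)) = M $$ (i, j)"
    and "(\<Sum>i<n. M $$ (i, i)) = 0"
  using assms unfolding traceless_hermitian_iff by (blast, metis, blast)

lemma traceless_hermitian_zero: "0\<^sub>m n n \<in> traceless_hermitian n"
  by (simp add: traceless_hermitian_iff)

lemma traceless_hermitian_add:
  assumes "X \<in> traceless_hermitian n" and "Y \<in> traceless_hermitian n"
  shows "X + Y \<in> traceless_hermitian n"
  using traceless_hermitianD[OF assms(1)] traceless_hermitianD[OF assms(2)]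
  by (simp add: traceless_hermitian_iff sum.distrib)

lemma traceless_hermitian_smult_real:
  assumes "X \<in> traceless_hermitian n"
  shows "complex_of_real r \<cdot>\<^sub>m X \<in> traceless_hermitian n"
  using traceless_hermitianD[OF assms]
  by (simp add: traceless_hermitian_iff flip: sum_distrib_left)

lemma index_mult_mat_square:
  "X \<in> carrier_mat n n \<Longrightarrow> Y \<in> carrier_mat n n \<Longrightarrow> i < n \<Longrightarrow> j < n \<Longrightarrow>
    (X * Y) $$ (i, j) = (\<Sum>l<n. X $$ (i, l) * Y $$ (l, j))"
  by (simp add: scalar_prod_def atLeast0LessThan)

lemma cnj_index_mult_traceless_hermitian:
  assumes "A \<in> traceless_hermitian n" "B \<in> traceless_hermitian n" "i < n" "j < n"
  shows "cnj ((A * B) $$ (j, i)) = (B * A) $$ (i, j)"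
proof -
  note A = traceless_hermitianD[OF assms(1)] and B = traceless_hermitianD[OF assms(2)]
  have "cnj ((A * B) $$ (j, i)) = (\<Sum>l<n. cnj (A $$ (j, l)) * cnj (B $$ (l, i)))"
    using assms(3,4) by (simp add: index_mult_mat_square[OF A(1) B(1)])
  also have "\<dots> = (\<Sum>l<n. B $$ (i, l) * A $$ (l, j))"
    using assms(3,4) A(2) B(2) by (intro sum.cong) (auto simp: mult.commute)
  also have "\<dots> = (B * A) $$ (i, j)"
    using assms(3,4) by (simp add: index_mult_mat_square[OF B(1) A(1)])
  finally show ?thesis .
qed

lemma trace_mult_comm:
  fixes A B :: "complex mat"
  assumes "A \<in> carrier_mat n n" "B \<in> carrier_mat n n"
  shows "(\<Sum>i<n. (A * B) $$ (i, i)) = (\<Sum>i<n. (B * A) $$ (i, i))"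
proof -
  have "(\<Sum>i<n. (A * B) $$ (i, i)) = (\<Sum>i<n. \<Sum>l<n. A $$ (i, l) * B $$ (l, i))"
    by (simp add: index_mult_mat_square[OF assms])
  also have "\<dots> = (\<Sum>l<n. \<Sum>i<n. B $$ (l, i) * A $$ (i, l))"
    by (subst sum.swap) (simp add: mult.commute)
  also have "\<dots> = (\<Sum>l<n. (B * A) $$ (l, l))"
    by (simp add: index_mult_mat_square[OF assms(2,1)])
  finally show ?thesis .
qed

lemma traceless_hermitian_ibracket:
  assumes "X \<in> traceless_hermitian n" and "Y \<in> traceless_hermitian n"
  shows "ibracket X Y \<in> traceless_hermitian n"
proof -
  have carrier: "X \<in> carrier_mat n n" "Y \<in> carrier_mat n n"
    using assms by (simp_all add: traceless_hermitianD)
  have "ibracket X Y = mat n n (\<lambda>(i, j). \<i> * ((X * Y) $$ (i, j) - (Y * X) $$ (i, j)))"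
    unfolding ibracket_def using carrier by auto
  then show ?thesis
    using cnj_index_mult_traceless_hermitian[OF assms] cnj_index_mult_traceless_hermitian[OF assms(2,1)]
    by (simp add: traceless_hermitian_iff algebra_simps trace_mult_comm[OF carrier] sum_subtractf
        flip: sum_distrib_left)
qed

lemma mono_mat_traceless_hermitian:
  assumes "\<And>i. i < n \<Longrightarrow> a i \<noteq> 0 \<Longrightarrow> g i < n \<and> g (g i) = i \<and> a (g i) = cnj (a i)"
    and "(\<Sum>i<n. if g i = i then a i else 0) = 0"
  shows "mono_mat n g a \<in> traceless_hermitian n"
  unfolding traceless_hermitian_iff
proof (intro conjI allI impI)
  fix i j assume i: "i < n" and j: "j < n"
  show "mono_mat n g a $$ (i, j) = cnj (mono_mat n g a $$ (j, i))"
  proof (cases "j = g i \<and> a i \<noteq> 0")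
    case True
    then show ?thesis using assms(1)[OF i] i j by auto
  next
    case False
    moreover have "\<not> (i = g j \<and> a j \<noteq> 0)"
    proof
      assume "i = g j \<and> a j \<noteq> 0"
      then have "g i = j" "a i \<noteq> 0"
        using assms(1)[OF j] by auto
      then show False
        using False by auto
    qed
    ultimately show ?thesis using i j by auto
  qed
next
  show "(\<Sum>i<n. mono_mat n g a $$ (i, i)) = 0"
    using assms(2) by (simp add: eq_commute[of _ "g _"])
qed auto

lemma sum_mats_traceless_hermitian:
  "(\<And>M. M \<in> set Ms \<Longrightarrow> M \<in> traceless_hermitian n) \<Longrightarrow> sum_mats n Ms \<in> traceless_hermitian n"
  by (induction Ms) (auto simp: sum_mats_def traceless_hermitian_zero traceless_hermitian_add)

lemma sum_z_sign: "b < N \<Longrightarrow> (\<Sum>i<(2::nat) ^ N. z_sign b i) = 0"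
proof -
  assume b: "b < N"
  have "bij_betw (flip_bit b) {..<(2::nat) ^ N} {..<2 ^ N}"
    by (rule bij_betwI[where g = "flip_bit b"]) (auto simp: flip_bit_less_power b)
  then have "(\<Sum>i<2 ^ N. z_sign b i) = (\<Sum>i<2 ^ N. z_sign b (flip_bit b i))"
    by (simp add: sum.reindex_bij_betw)
  also have "\<dots> = - (\<Sum>i<2 ^ N. z_sign b i)"
    by (simp add: z_sign_flip_bit sum_negf)
  finally show ?thesis by simp
qed

lemma Z_op_traceless_hermitian:
  assumes "b < N"
  shows "Z_op N b \<in> traceless_hermitian (2 ^ N)"
  unfolding Z_op_def
proof (rule mono_mat_traceless_hermitian)
  show "(\<Sum>i<2 ^ N. if id i = i then z_sign b i else 0) = 0"
    using sum_z_sign[OF assms] by simp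
qed (simp add: z_sign_def)

lemma X_op_traceless_hermitian: "b < N \<Longrightarrow> X_op N b \<in> traceless_hermitian (2 ^ N)"
  unfolding X_op_def by (rule mono_mat_traceless_hermitian) (auto simp: flip_bit_less_power)

lemma Y_op_mult_Y_op_traceless_hermitian:
  assumes "a < N" "c < N" "a \<noteq> c"
  shows "Y_op N a * Y_op N c \<in> traceless_hermitian (2 ^ N)"
  unfolding Y_op_mult_Y_op[OF assms(1)]
proof (rule mono_mat_traceless_hermitian)
  fix i :: nat assume "i < 2 ^ N"
  then show "(flip_bit c \<circ> flip_bit a) i < 2 ^ N
    \<and> (flip_bit c \<circ> flip_bit a) ((flip_bit c \<circ> flip_bit a) i) = i
    \<and> y_phase a ((flip_bit c \<circ> flip_bit a) i) * y_phase c (flip_bit a ((flip_bit c \<circ> flip_bit a) i))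
      = cnj (y_phase a i * y_phase c (flip_bit a i))"
    using assms by (simp add: flip_bit_less_power flip_bit_commute[of c a] y_phase_flip_bit)
      (auto simp: y_phase_def)
qed (use assms(3) in \<open>simp add: flip_bit_flip_bit_neq\<close>)

lemma transverse_field_traceless_hermitian: "transverse_field N \<in> traceless_hermitian (2 ^ N)"
  unfolding transverse_field_eq
  by (rule sum_mats_traceless_hermitian) (auto intro: X_op_traceless_hermitian)

lemma yy_coupling_traceless_hermitian: "yy_coupling N \<in> traceless_hermitian (2 ^ N)"
  unfolding yy_coupling_eq
  by (rule sum_mats_traceless_hermitian) (auto intro!: Y_op_mult_Y_op_traceless_hermitian)

lemma gen_set_traceless_hermitian: "X \<in> gen_set N \<Longrightarrow> X \<in> traceless_hermitian (2 ^ N)"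
  using Z_op_traceless_hermitian transverse_field_traceless_hermitian yy_coupling_traceless_hermitian
  by (auto simp: gen_set_eq split: if_splits)

lemma lie_closure_gen_set_subset: "lie_closure (2 ^ N) (gen_set N) \<subseteq> traceless_hermitian (2 ^ N)"
proof
  fix X assume "X \<in> lie_closure (2 ^ N) (gen_set N)"
  then show "X \<in> traceless_hermitian (2 ^ N)"
  proof (induction rule: lie_closure.induct)
    case (gen X)
    show ?case by (rule gen_set_traceless_hermitian[OF gen(1)])
  next
    case zero
    show ?case by (rule traceless_hermitian_zero)
  next
    case (add X Y)
    show ?case using add.IH by (rule traceless_hermitian_add)
  next
    case (smult X r)
    show ?case using smult.IH by (rule traceless_hermitian_smult_real)
  next
    case (bracket X Y)
    show ?case using bracket.IH by (rule traceless_hermitian_ibracket)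
  qed
qed

lemma ibracket_Z_op_transverse_field:
  assumes "b < N"
  shows "ibracket (Z_op N b) (transverse_field N) = mono_mat (2 ^ N) (flip_bit b) (\<lambda>i. 2 * \<i> * z_sign b i)"
proof (rule eq_matI)
  fix i j assume "i < dim_row (mono_mat (2 ^ N) (flip_bit b) (\<lambda>i. 2 * \<i> * z_sign b i))"
    and "j < dim_col (mono_mat (2 ^ N) (flip_bit b) (\<lambda>i. 2 * \<i> * z_sign b i))"
  then have i: "i < 2 ^ N" and j: "j < 2 ^ N" by auto
  have "ibracket (Z_op N b) (transverse_field N) $$ (i, j)
      = (\<Sum>b'<N. \<i> * (z_sign b i - z_sign b j) * X_op N b' $$ (i, j))"
    unfolding Z_op_def using i j
    by (simp add: ibracket_diag_mat transverse_field_carrier index_transverse_field sum_distrib_left)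
  also have "\<dots> = (\<Sum>b'<N. if b' = b then (if j = flip_bit b i then 2 * \<i> * z_sign b i else 0) else 0)"
    using i j by (intro sum.cong) (auto simp: X_op_def z_sign_flip_bit)
  finally show "ibracket (Z_op N b) (transverse_field N) $$ (i, j)
      = mono_mat (2 ^ N) (flip_bit b) (\<lambda>i. 2 * \<i> * z_sign b i) $$ (i, j)"
    using assms i j by simp
qed (use transverse_field_carrier[of N] in \<open>auto simp: ibracket_def Z_op_def\<close>)

lemma Y_op_in_lie_closure:
  assumes "b < N" and "Z_op N b \<in> lie_closure (2 ^ N) S" and "transverse_field N \<in> lie_closure (2 ^ N) S"
  shows "Y_op N b \<in> lie_closure (2 ^ N) S"
proof -
  have "mono_mat (2 ^ N) (flip_bit b) (\<lambda>i. 2 * \<i> * z_sign b i) \<in> lie_closure (2 ^ N) S"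
    using lie_closure.bracket[OF assms(2,3)] by (simp add: ibracket_Z_op_transverse_field assms(1))
  from mono_mat_lie_closure_scaleR[OF this, of "-1/2"] show ?thesis
    unfolding Y_op_def by (rule mono_mat_lie_closure_cong) (auto simp: y_phase_def z_sign_def)
qed

lemma X_op_in_lie_closure:
  assumes "b < N" and "Z_op N b \<in> lie_closure (2 ^ N) S" and "Y_op N b \<in> lie_closure (2 ^ N) S"
  shows "X_op N b \<in> lie_closure (2 ^ N) S"
  unfolding X_op_def
  by (rule mono_mat_lie_closure_ibracket[OF assms(2)[unfolded Z_op_def] assms(3)[unfolded Y_op_def],
        where r = "1/2"])
    (auto simp: flip_bit_less_power assms(1) z_sign_def y_phase_def bit_flip_bit_nat)

definition XX_op :: "nat \<Rightarrow> nat \<Rightarrow> nat \<Rightarrow> complex mat" where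
  "XX_op N a c = mono_mat (2 ^ N) (\<lambda>i. flip_bit a (flip_bit c i)) (\<lambda>_. 1)"

definition ZZ_op :: "nat \<Rightarrow> nat \<Rightarrow> nat \<Rightarrow> complex mat" where
  "ZZ_op N a c = mono_mat (2 ^ N) id (\<lambda>i. z_sign a i * z_sign c i)"

text \<open>Only the term \<open>Y\<^sub>a Y\<^sub>c\<close> of the coupling anticommutes with both \<open>Z\<^sub>a\<close> and \<open>Z\<^sub>c\<close>.\<close>
lemma double_ibracket_Y_op_mult_Y_op:
  assumes "c < a" "a' < N" "c' < a'" "j = flip_bit c' (flip_bit a' i)"
  shows "\<i> * (z_sign c i - z_sign c j) * (\<i> * (z_sign a i - z_sign a j)
      * (y_phase a' i * y_phase c' (flip_bit a' i)))
    = (if (a', c') = (a, c) then 4 else 0)"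
  using assms by (auto simp: z_sign_flip_bit y_phase_flip_bit) (auto simp: z_sign_def y_phase_def)

lemma double_ibracket_entry_Y_op_mult_Y_op:
  assumes "c < a" "c' < a'" "a' < N" "i < 2 ^ N" "j < 2 ^ N"
  shows "\<i> * (z_sign c i - z_sign c j) * (\<i> * (z_sign a i - z_sign a j) * (Y_op N a' * Y_op N c') $$ (i, j))
    = (if (a', c') = (a, c) then (if j = flip_bit a (flip_bit c i) then 4 else 0) else 0)"
proof (cases "j = flip_bit c' (flip_bit a' i)")
  case True
  then show ?thesis
    using double_ibracket_Y_op_mult_Y_op[OF assms(1,3,2) True] assms
    by (auto simp: Y_op_mult_Y_op flip_bit_commute)
next
  case False
  then show ?thesis
    using assms by (auto simp: Y_op_mult_Y_op flip_bit_commute)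
qed

lemma double_ibracket_Z_op_yy_coupling:
  assumes "c < a" "a < N"
  shows "ibracket (Z_op N c) (ibracket (Z_op N a) (yy_coupling N))
    = mono_mat (2 ^ N) (\<lambda>i. flip_bit a (flip_bit c i)) (\<lambda>_. 4)"
proof (rule eq_matI)
  fix i j assume "i < dim_row (mono_mat (2 ^ N) (\<lambda>i. flip_bit a (flip_bit c i)) (\<lambda>_. 4))"
    and "j < dim_col (mono_mat (2 ^ N) (\<lambda>i. flip_bit a (flip_bit c i)) (\<lambda>_. 4))"
  then have i: "i < 2 ^ N" and j: "j < 2 ^ N" by auto
  have "finite {(a', c'). c' < a' \<and> a' < N}"
    by (rule finite_subset[of _ "{..<N} \<times> {..<N}"]) auto
  have "ibracket (Z_op N c) (ibracket (Z_op N a) (yy_coupling N)) $$ (i, j)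
      = \<i> * (z_sign c i - z_sign c j) * (\<i> * (z_sign a i - z_sign a j) * yy_coupling N $$ (i, j))"
    unfolding Z_op_def using i j by (simp add: ibracket_diag_mat yy_coupling_carrier)
  also have "\<dots> = (\<Sum>(a', c')\<in>{(a', c'). c' < a' \<and> a' < N}.
      \<i> * (z_sign c i - z_sign c j) * (\<i> * (z_sign a i - z_sign a j) * (Y_op N a' * Y_op N c') $$ (i, j)))"
    using i j by (simp add: index_yy_coupling sum_distrib_left case_prod_unfold)
  also have "\<dots> = (\<Sum>x\<in>{(a', c'). c' < a' \<and> a' < N}.
      if x = (a, c) then (if j = flip_bit a (flip_bit c i) then 4 else 0) else 0)"
  proof (intro sum.cong refl, clarify)
    fix a' c' assume "c' < a'" "a' < N"
    then show "\<i> * (z_sign c i - z_sign c j) * (\<i> * (z_sign a i - z_sign a j) * (Y_op N a' * Y_op N c') $$ (i, j))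
      = (if (a', c') = (a, c) then (if j = flip_bit a (flip_bit c i) then 4 else 0) else 0)"
      by (rule double_ibracket_entry_Y_op_mult_Y_op[OF assms(1) _ _ i j])
  qed
  also have "\<dots> = (if j = flip_bit a (flip_bit c i) then 4 else 0)"
    using assms by (subst sum.delta[OF \<open>finite {(a', c'). c' < a' \<and> a' < N}\<close>]) auto
  also have "\<dots> = mono_mat (2 ^ N) (\<lambda>i. flip_bit a (flip_bit c i)) (\<lambda>_. 4) $$ (i, j)"
    using i j by simp
  finally show "ibracket (Z_op N c) (ibracket (Z_op N a) (yy_coupling N)) $$ (i, j) = \<dots>" .
qed (use yy_coupling_carrier[of N] in \<open>auto simp: ibracket_def Z_op_def\<close>)

lemma XX_op_in_lie_closure:
  assumes "c < a" "a < N" and "yy_coupling N \<in> lie_closure (2 ^ N) S"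
    and "Z_op N a \<in> lie_closure (2 ^ N) S" "Z_op N c \<in> lie_closure (2 ^ N) S"
  shows "XX_op N a c \<in> lie_closure (2 ^ N) S"
proof -
  have "mono_mat (2 ^ N) (\<lambda>i. flip_bit a (flip_bit c i)) (\<lambda>_. 4) \<in> lie_closure (2 ^ N) S"
    using lie_closure.bracket[OF assms(5) lie_closure.bracket[OF assms(4,3)]]
    by (simp add: double_ibracket_Z_op_yy_coupling assms(1,2))
  from mono_mat_lie_closure_scaleR[OF this, of "1/4"] show ?thesis
    unfolding XX_op_def by (rule mono_mat_lie_closure_cong) auto
qed

lemma ZZ_op_in_lie_closure:
  assumes "a \<noteq> c" "a < N" "c < N"
    and "Y_op N a \<in> lie_closure (2 ^ N) S" "Y_op N c \<in> lie_closure (2 ^ N) S"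
    and "XX_op N a c \<in> lie_closure (2 ^ N) S"
  shows "ZZ_op N a c \<in> lie_closure (2 ^ N) S"
proof -
  have "mono_mat (2 ^ N) (flip_bit c) (z_sign a) \<in> lie_closure (2 ^ N) S"
  proof (rule mono_mat_lie_closure_ibracket[OF assms(4)[unfolded Y_op_def] assms(6)[unfolded XX_op_def],
        where r = "1/2"])
    fix i :: nat
    show "z_sign a i = complex_of_real (1/2) * (\<i> * (y_phase a i * 1 - 1 * y_phase a (flip_bit a (flip_bit c i))))"
      using assms(1) by (simp add: y_phase_flip_bit i_mult_y_phase)
  qed (use assms(2,3) in \<open>simp_all add: flip_bit_less_power flip_bit_commute[of a c]\<close>)
  then show ?thesis
    unfolding ZZ_op_def
  proof (rule mono_mat_lie_closure_ibracket[OF assms(5)[unfolded Y_op_def], where r = "1/2"])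
    fix i :: nat
    show "z_sign a i * z_sign c i
      = complex_of_real (1/2) * (\<i> * (y_phase c i * z_sign a (flip_bit c i) - z_sign a i * y_phase c (flip_bit c i)))"
      using assms(1) by (simp add: y_phase_flip_bit z_sign_flip_bit algebra_simps i_mult_y_phase)
  qed (use assms(2,3) in \<open>simp_all add: flip_bit_less_power\<close>)
qed

section \<open>Matrix units in the Lie closure\<close>

definition agrees_on :: "nat set \<Rightarrow> nat \<Rightarrow> nat \<Rightarrow> bool" where
  "agrees_on T p i \<longleftrightarrow> (\<forall>m\<in>T. bit i m = bit p m)"

lemma agrees_on_insert: "agrees_on (insert m T) p i \<longleftrightarrow> bit i m = bit p m \<and> agrees_on T p i"
  by (auto simp: agrees_on_def)

lemma agrees_on_flip_bit: "b \<notin> T \<Longrightarrow> agrees_on T p (flip_bit b i) = agrees_on T p i"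
  by (auto simp: agrees_on_def bit_flip_bit_nat)

text \<open>A control bit \<open>m\<close> is added with the projections \<open>(1 \<plusminus> Z\<^sub>m)/2\<close>, since
  \<open>i[Y\<^sub>b, Z\<^sub>b Z\<^sub>m] = -2 X\<^sub>b Z\<^sub>m\<close> and \<open>i[X\<^sub>b, Z\<^sub>b Z\<^sub>m] = 2 Y\<^sub>b Z\<^sub>m\<close>.\<close>
lemma controlled_flips_insert_in_lie_closure:
  assumes "b < N" "m < N" "m \<noteq> b" "b \<notin> T"
    and X: "mono_mat (2 ^ N) (flip_bit b) (\<lambda>i. if agrees_on T p i then 1 else 0) \<in> lie_closure (2 ^ N) S"
    and Y: "mono_mat (2 ^ N) (flip_bit b) (\<lambda>i. if agrees_on T p i then y_phase b i else 0) \<in> lie_closure (2 ^ N) S"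
    and "ZZ_op N b m \<in> lie_closure (2 ^ N) S"
  shows "mono_mat (2 ^ N) (flip_bit b) (\<lambda>i. if agrees_on (insert m T) p i then 1 else 0) \<in> lie_closure (2 ^ N) S"
    and "mono_mat (2 ^ N) (flip_bit b) (\<lambda>i. if agrees_on (insert m T) p i then y_phase b i else 0)
      \<in> lie_closure (2 ^ N) S"
proof -
  have ZZ: "mono_mat (2 ^ N) id (\<lambda>i. z_sign b i * z_sign m i) \<in> lie_closure (2 ^ N) S"
    using assms(7) by (simp add: ZZ_op_def)
  have XZ: "mono_mat (2 ^ N) (flip_bit b) (\<lambda>i. if agrees_on T p i then -2 * z_sign m i else 0)
      \<in> lie_closure (2 ^ N) S"
    by (rule mono_mat_lie_closure_ibracket[OF Y ZZ, where r = 1 and k = "flip_bit b"])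
      (use assms(1-4) in \<open>auto simp: flip_bit_less_power agrees_on_flip_bit
        y_phase_def z_sign_def bit_flip_bit_nat\<close>)
  have YZ: "mono_mat (2 ^ N) (flip_bit b) (\<lambda>i. if agrees_on T p i then -2 * \<i> * z_sign b i * z_sign m i else 0)
      \<in> lie_closure (2 ^ N) S"
    by (rule mono_mat_lie_closure_ibracket[OF X ZZ, where r = 1 and k = "flip_bit b"])
      (use assms(1-4) in \<open>auto simp: flip_bit_less_power agrees_on_flip_bit z_sign_flip_bit\<close>)
  show "mono_mat (2 ^ N) (flip_bit b) (\<lambda>i. if agrees_on (insert m T) p i then 1 else 0) \<in> lie_closure (2 ^ N) S"
  proof (rule mono_mat_lie_closure_lincomb[OF X XZ, where r = "1/2" and s = "if bit p m then 1/4 else -1/4"])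
    fix i :: nat
    show "(if agrees_on (insert m T) p i then 1 else 0) = complex_of_real (1/2) * (if agrees_on T p i then 1 else 0)
      + complex_of_real (if bit p m then 1/4 else -1/4) * (if agrees_on T p i then -2 * z_sign m i else 0)"
      unfolding agrees_on_insert z_sign_def
      by (cases "agrees_on T p i"; cases "bit p m"; cases "bit i m") simp_all
  qed
  show "mono_mat (2 ^ N) (flip_bit b) (\<lambda>i. if agrees_on (insert m T) p i then y_phase b i else 0)
      \<in> lie_closure (2 ^ N) S"
  proof (rule mono_mat_lie_closure_lincomb[OF Y YZ, where r = "1/2" and s = "if bit p m then -1/4 else 1/4"])
    fix i :: nat
    show "(if agrees_on (insert m T) p i then y_phase b i else 0)
      = complex_of_real (1/2) * (if agrees_on T p i then y_phase b i else 0)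
      + complex_of_real (if bit p m then -1/4 else 1/4)
        * (if agrees_on T p i then -2 * \<i> * z_sign b i * z_sign m i else 0)"
      unfolding agrees_on_insert z_sign_def y_phase_def
      by (cases "agrees_on T p i"; cases "bit p m"; cases "bit i m"; cases "bit i b") simp_all
  qed
qed

lemma controlled_flips_in_lie_closure:
  assumes "finite T" "T \<subseteq> {..<N}" "b < N" "b \<notin> T"
    and X: "\<And>b. b < N \<Longrightarrow> X_op N b \<in> lie_closure (2 ^ N) S"
    and Y: "\<And>b. b < N \<Longrightarrow> Y_op N b \<in> lie_closure (2 ^ N) S"
    and ZZ: "\<And>a c. a \<noteq> c \<Longrightarrow> a < N \<Longrightarrow> c < N \<Longrightarrow> ZZ_op N a c \<in> lie_closure (2 ^ N) S"
  shows "mono_mat (2 ^ N) (flip_bit b) (\<lambda>i. if agrees_on T p i then 1 else 0) \<in> lie_closure (2 ^ N) S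
    \<and> mono_mat (2 ^ N) (flip_bit b) (\<lambda>i. if agrees_on T p i then y_phase b i else 0) \<in> lie_closure (2 ^ N) S"
  using assms(1,2,4)
proof (induction T rule: finite_induct)
  case empty
  show ?case
    using X[OF assms(3)] Y[OF assms(3)] by (simp add: agrees_on_def X_op_def Y_op_def)
next
  case (insert m T)
  then have m: "m < N" "m \<noteq> b" and "b \<notin> T"
    by auto
  with insert.IH have "mono_mat (2 ^ N) (flip_bit b) (\<lambda>i. if agrees_on T p i then 1 else 0) \<in> lie_closure (2 ^ N) S"
    and "mono_mat (2 ^ N) (flip_bit b) (\<lambda>i. if agrees_on T p i then y_phase b i else 0) \<in> lie_closure (2 ^ N) S"
    using insert.prems by auto
  with controlled_flips_insert_in_lie_closure[OF assms(3) m \<open>b \<notin> T\<close>] show ?case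
    using ZZ[of b m] m assms(3) by auto
qed

definition sym_unit :: "nat \<Rightarrow> nat \<Rightarrow> nat \<Rightarrow> complex mat" where
  "sym_unit n p q = mono_mat n (id(p := q, q := p)) (\<lambda>i. if i = p \<or> i = q then 1 else 0)"

definition asym_unit :: "nat \<Rightarrow> nat \<Rightarrow> nat \<Rightarrow> complex mat" where
  "asym_unit n p q = mono_mat n (id(p := q, q := p)) (\<lambda>i. if i = p then \<i> else if i = q then -\<i> else 0)"

definition diag_unit :: "nat \<Rightarrow> nat \<Rightarrow> nat \<Rightarrow> complex mat" where
  "diag_unit n p q = mono_mat n id (\<lambda>i. if i = p then 1 else if i = q then -1 else 0)"

lemma agrees_on_all_but_iff:
  assumes "p < 2 ^ N" "i < 2 ^ N" "b < N"
  shows "agrees_on ({..<N} - {b}) p i \<longleftrightarrow> i = p \<or> i = flip_bit b p"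
proof -
  have "agrees_on ({..<N} - {b}) p i \<longleftrightarrow> (\<forall>m. m \<noteq> b \<longrightarrow> bit p m = bit i m)"
    unfolding agrees_on_def using bit_less_of_less_power assms(1,2) by auto
  also have "\<dots> \<longleftrightarrow> i = p \<or> i = flip_bit b p"
    using eq_iff_bits_eq_except[of i p b] eq_flip_bit_iff[of i b p] by auto
  finally show ?thesis .
qed

lemma units_at_flip_bit_in_lie_closure:
  assumes "b < N" "p < 2 ^ N"
    and "\<And>b. b < N \<Longrightarrow> X_op N b \<in> lie_closure (2 ^ N) S"
    and "\<And>b. b < N \<Longrightarrow> Y_op N b \<in> lie_closure (2 ^ N) S"
    and "\<And>a c. a \<noteq> c \<Longrightarrow> a < N \<Longrightarrow> c < N \<Longrightarrow> ZZ_op N a c \<in> lie_closure (2 ^ N) S"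
  shows "sym_unit (2 ^ N) p (flip_bit b p) \<in> lie_closure (2 ^ N) S"
    and "asym_unit (2 ^ N) p (flip_bit b p) \<in> lie_closure (2 ^ N) S"
proof -
  note controlled = controlled_flips_in_lie_closure[of "{..<N} - {b}" N b, OF _ _ assms(1) _ assms(3-5)]
  have agrees: "agrees_on ({..<N} - {b}) p i \<longleftrightarrow> i = p \<or> i = flip_bit b p" if "i < 2 ^ N" for i
    using agrees_on_all_but_iff[OF assms(2) that assms(1)] .
  show "sym_unit (2 ^ N) p (flip_bit b p) \<in> lie_closure (2 ^ N) S"
    unfolding sym_unit_def
  proof (rule mono_mat_lie_closure_cong[OF conjunct1[OF controlled]])
    fix i :: nat assume "i < 2 ^ N"
    then show "(if agrees_on ({..<N} - {b}) p i then 1 else 0) = (if i = p \<or> i = flip_bit b p then 1 else 0)"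
      and "(if agrees_on ({..<N} - {b}) p i then 1 else 0) \<noteq> (0::complex)
        \<Longrightarrow> flip_bit b i = (id(p := flip_bit b p, flip_bit b p := p)) i"
      using agrees by (auto split: if_splits)
  qed auto
  show "asym_unit (2 ^ N) p (flip_bit b p) \<in> lie_closure (2 ^ N) S"
    unfolding asym_unit_def
  proof (rule mono_mat_lie_closure_cong[OF mono_mat_lie_closure_scaleR[OF conjunct2[OF controlled],
          of "if bit p b then 1 else -1"]])
    fix i :: nat assume "i < 2 ^ N"
    then show "complex_of_real (if bit p b then 1 else -1)
        * (if agrees_on ({..<N} - {b}) p i then y_phase b i else 0)
      = (if i = p then \<i> else if i = flip_bit b p then -\<i> else 0)"
      and "complex_of_real (if bit p b then 1 else -1)
        * (if agrees_on ({..<N} - {b}) p i then y_phase b i else 0) \<noteq> 0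
        \<Longrightarrow> flip_bit b i = (id(p := flip_bit b p, flip_bit b p := p)) i"
      using agrees by (auto simp: y_phase_def bit_flip_bit_nat split: if_splits)
  qed auto
qed

lemma asym_unit_in_lie_closure_via:
  assumes "p \<noteq> r" "r \<noteq> q" "p \<noteq> q" "p < n" "r < n" "q < n"
    and "sym_unit n p r \<in> lie_closure n S" "sym_unit n r q \<in> lie_closure n S"
  shows "asym_unit n p q \<in> lie_closure n S"
  unfolding asym_unit_def
  by (rule mono_mat_lie_closure_ibracket[OF assms(7,8)[unfolded sym_unit_def], where r = 1])
    (use assms(1-6) in \<open>auto split: if_splits\<close>)

lemma sym_unit_in_lie_closure_via:
  assumes "p \<noteq> r" "r \<noteq> q" "p \<noteq> q" "p < n" "r < n" "q < n"
    and "sym_unit n p r \<in> lie_closure n S" "asym_unit n r q \<in> lie_closure n S"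
  shows "sym_unit n p q \<in> lie_closure n S"
  unfolding sym_unit_def
  by (rule mono_mat_lie_closure_ibracket[OF assms(7)[unfolded sym_unit_def] assms(8)[unfolded asym_unit_def],
        where r = "-1"])
    (use assms(1-6) in \<open>auto split: if_splits\<close>)

lemma diag_unit_in_lie_closure:
  assumes "p \<noteq> q" "p < n" "q < n"
    and "sym_unit n p q \<in> lie_closure n S" "asym_unit n p q \<in> lie_closure n S"
  shows "diag_unit n p q \<in> lie_closure n S"
  unfolding diag_unit_def
  by (rule mono_mat_lie_closure_ibracket[OF assms(4)[unfolded sym_unit_def] assms(5)[unfolded asym_unit_def],
        where r = "1/2" and k = id])
    (use assms(1-3) in \<open>auto split: if_splits\<close>)

definition differing_bits :: "nat \<Rightarrow> nat \<Rightarrow> nat \<Rightarrow> nat set" where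
  "differing_bits N p q = {m. m < N \<and> bit p m \<noteq> bit q m}"

lemma finite_differing_bits: "finite (differing_bits N p q)"
  by (simp add: differing_bits_def)

lemma differing_bits_nonempty:
  assumes "p < 2 ^ N" "q < 2 ^ N" "p \<noteq> q"
  shows "differing_bits N p q \<noteq> {}"
proof -
  obtain m where "bit p m \<noteq> bit q m"
    using assms(3) bit_eq_iff by blast
  moreover from this have "m < N"
    using bit_less_of_less_power assms(1,2) by blast
  ultimately show ?thesis
    by (auto simp: differing_bits_def)
qed

lemma differing_bits_flip_bit:
  "b \<in> differing_bits N p q \<Longrightarrow> differing_bits N (flip_bit b p) q = differing_bits N p q - {b}"
  by (auto simp: differing_bits_def bit_flip_bit_nat)

text \<open>Walk from \<open>p\<close> to \<open>q\<close> along a shortest path in the hypercube of bit strings.\<close>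
lemma units_in_lie_closure_of_edges:
  assumes edges: "\<And>p b. p < 2 ^ N \<Longrightarrow> b < N \<Longrightarrow>
      sym_unit (2 ^ N) p (flip_bit b p) \<in> lie_closure (2 ^ N) S
      \<and> asym_unit (2 ^ N) p (flip_bit b p) \<in> lie_closure (2 ^ N) S"
    and "p < 2 ^ N" "q < 2 ^ N" "p \<noteq> q"
  shows "sym_unit (2 ^ N) p q \<in> lie_closure (2 ^ N) S \<and> asym_unit (2 ^ N) p q \<in> lie_closure (2 ^ N) S"
  using assms(2-4)
proof (induction "card (differing_bits N p q)" arbitrary: p rule: less_induct)
  case less
  obtain b where b: "b \<in> differing_bits N p q"
    using differing_bits_nonempty[OF less.prems] by blast
  then have "b < N"
    by (simp add: differing_bits_def)
  define r where "r = flip_bit b p"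
  have r: "r < 2 ^ N" "r \<noteq> p"
    using flip_bit_less_power less.prems(1) \<open>b < N\<close> by (simp_all add: r_def)
  have pr: "sym_unit (2 ^ N) p r \<in> lie_closure (2 ^ N) S" "asym_unit (2 ^ N) p r \<in> lie_closure (2 ^ N) S"
    unfolding r_def using edges less.prems(1) \<open>b < N\<close> by blast+
  show ?case
  proof (cases "r = q")
    case True
    then show ?thesis using pr by simp
  next
    case False
    have "card (differing_bits N r q) < card (differing_bits N p q)"
      unfolding r_def differing_bits_flip_bit[OF b]
      by (rule card_Diff1_less[OF finite_differing_bits b])
    then have "sym_unit (2 ^ N) r q \<in> lie_closure (2 ^ N) S" "asym_unit (2 ^ N) r q \<in> lie_closure (2 ^ N) S"
      using less.hyps r(1) less.prems(2) False by blast+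
    then show ?thesis
      using asym_unit_in_lie_closure_via sym_unit_in_lie_closure_via r False less.prems pr by metis
  qed
qed

section \<open>Decomposition of traceless Hermitian matrices\<close>

definition hermitian_pair :: "nat \<Rightarrow> nat \<Rightarrow> nat \<Rightarrow> complex \<Rightarrow> complex mat" where
  "hermitian_pair n p q z = mono_mat n (id(p := q, q := p)) (\<lambda>i. if i = p then z else if i = q then cnj z else 0)"

lemma hermitian_pair_in_lie_closure:
  assumes "p \<noteq> q" and "sym_unit n p q \<in> lie_closure n S" and "asym_unit n p q \<in> lie_closure n S"
  shows "hermitian_pair n p q z \<in> lie_closure n S"
  unfolding hermitian_pair_def
  by (rule mono_mat_lie_closure_lincomb[OF assms(2,3)[unfolded sym_unit_def asym_unit_def],
        where r = "Re z" and s = "Im z"])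
    (use assms(1) in \<open>auto simp: complex_eq_iff\<close>)

lemma index_hermitian_pair:
  assumes "p < q" "q < n" "i < n" "j < n" and "cnj (M $$ (p, q)) = M $$ (q, p)"
  shows "hermitian_pair n p q (M $$ (p, q)) $$ (i, j)
    = (if (p, q) = (min i j, max i j) then (if i = j then 0 else M $$ (i, j)) else 0)"
  using assms by (auto simp: hermitian_pair_def min_def max_def)

lemma index_smult_diag_unit:
  "i < n \<Longrightarrow> j < n \<Longrightarrow> (c \<cdot>\<^sub>m diag_unit n p q) $$ (i, j)
    = (if i = j then (if i = p then c else if i = q then - c else 0) else 0)"
  by (simp add: diag_unit_def)

lemma sum_hermitian_pairs_index:
  assumes "M \<in> traceless_hermitian n" "i < n" "j < n"
  shows "(\<Sum>x\<in>{(p, q). p < q \<and> q < n}. hermitian_pair n (fst x) (snd x) (M $$ x) $$ (i, j))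
    = (if i = j then 0 else M $$ (i, j))"
proof -
  have "finite {(p, q). p < q \<and> q < n}"
    by (rule finite_subset[of _ "{..<n} \<times> {..<n}"]) auto
  have "(\<Sum>x\<in>{(p, q). p < q \<and> q < n}. hermitian_pair n (fst x) (snd x) (M $$ x) $$ (i, j))
      = (\<Sum>x\<in>{(p, q). p < q \<and> q < n}. if x = (min i j, max i j) then (if i = j then 0 else M $$ (i, j)) else 0)"
  proof (intro sum.cong refl, clarify)
    fix p q assume "p < q" "q < n"
    then show "hermitian_pair n (fst (p, q)) (snd (p, q)) (M $$ (p, q)) $$ (i, j)
      = (if (p, q) = (min i j, max i j) then (if i = j then 0 else M $$ (i, j)) else 0)"
      using assms(2,3) traceless_hermitianD(2)[OF assms(1), of q p] by (simp add: index_hermitian_pair)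
  qed
  also have "\<dots> = (if i = j then 0 else M $$ (i, j))"
    using assms(2,3) by (subst sum.delta[OF \<open>finite {(p, q). p < q \<and> q < n}\<close>]) (auto simp: min_def max_def)
  finally show ?thesis .
qed

lemma sum_diag_units_index:
  assumes "M \<in> traceless_hermitian n" "i < n" "j < n"
  shows "(\<Sum>p\<in>{1..<n}. (complex_of_real (Re (M $$ (p, p))) \<cdot>\<^sub>m diag_unit n p 0) $$ (i, j))
    = (if i = j then M $$ (i, j) else 0)"
proof -
  note M = traceless_hermitianD[OF assms(1)]
  have real_diagonal: "complex_of_real (Re (M $$ (p, p))) = M $$ (p, p)" if "p < n" for p
    using M(2)[OF that that] by (simp add: complex_eq_iff)
  consider "i \<noteq> j" | "i = j" "i = 0" | "i = j" "i \<noteq> 0"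
    by blast
  then show ?thesis
  proof cases
    case 1
    then show ?thesis
      using assms(2,3) by (simp add: index_smult_diag_unit)
  next
    case 2
    then have "(\<Sum>p\<in>{1..<n}. (complex_of_real (Re (M $$ (p, p))) \<cdot>\<^sub>m diag_unit n p 0) $$ (i, j))
        = - (\<Sum>p\<in>{1..<n}. M $$ (p, p))"
      using assms(2,3) by (auto simp: index_smult_diag_unit real_diagonal sum_negf intro: sum.cong)
    also have "\<dots> = M $$ (0, 0)"
    proof -
      have "M $$ (0, 0) + (\<Sum>p\<in>{1..<n}. M $$ (p, p)) = 0"
        using M(3) assms(2) by (simp add: atLeast0LessThan[symmetric] sum.atLeast_Suc_lessThan)
      then show ?thesis
        by (metis add_eq_0_iff minus_minus)
    qed
    finally show ?thesis
      using 2 by simp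
  next
    case 3
    then have "(\<Sum>p\<in>{1..<n}. (complex_of_real (Re (M $$ (p, p))) \<cdot>\<^sub>m diag_unit n p 0) $$ (i, j))
        = (\<Sum>p\<in>{1..<n}. if p = i then M $$ (i, i) else 0)"
      using assms(2,3) by (intro sum.cong) (auto simp: index_smult_diag_unit real_diagonal)
    then show ?thesis
      using 3 assms(2) by simp
  qed
qed

lemma traceless_hermitian_eq_sum_units:
  assumes "M \<in> traceless_hermitian n"
  shows "M = mat n n (\<lambda>(i, j). \<Sum>x\<in>{(p, q). p < q \<and> q < n}. hermitian_pair n (fst x) (snd x) (M $$ x) $$ (i, j))
    + mat n n (\<lambda>(i, j). \<Sum>p\<in>{1..<n}. (complex_of_real (Re (M $$ (p, p))) \<cdot>\<^sub>m diag_unit n p 0) $$ (i, j))"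
  (is "M = ?A + ?B")
proof (rule eq_matI)
  fix i j assume "i < dim_row (?A + ?B)" "j < dim_col (?A + ?B)"
  then have "i < n" "j < n"
    by auto
  then show "M $$ (i, j) = (?A + ?B) $$ (i, j)"
    using sum_hermitian_pairs_index[OF assms] sum_diag_units_index[OF assms] by simp
qed (use traceless_hermitianD(1)[OF assms] in auto)

lemma traceless_hermitian_in_lie_closure:
  assumes "M \<in> traceless_hermitian n" "0 < n"
    and units: "\<And>p q. p < n \<Longrightarrow> q < n \<Longrightarrow> p \<noteq> q \<Longrightarrow>
      sym_unit n p q \<in> lie_closure n S \<and> asym_unit n p q \<in> lie_closure n S \<and> diag_unit n p q \<in> lie_closure n S"
  shows "M \<in> lie_closure n S"
proof -
  have "mat n n (\<lambda>(i, j). \<Sum>x\<in>{(p, q). p < q \<and> q < n}. hermitian_pair n (fst x) (snd x) (M $$ x) $$ (i, j))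
      \<in> lie_closure n S"
  proof (rule lie_closure_sum)
    show "finite {(p, q). p < q \<and> q < n}"
      by (rule finite_subset[of _ "{..<n} \<times> {..<n}"]) auto
  next
    fix x assume "x \<in> {(p, q). p < q \<and> q < n}"
    then show "hermitian_pair n (fst x) (snd x) (M $$ x) \<in> lie_closure n S"
      using units[of "fst x" "snd x"] by (auto intro: hermitian_pair_in_lie_closure)
  qed
  moreover have "mat n n (\<lambda>(i, j). \<Sum>p\<in>{1..<n}. (complex_of_real (Re (M $$ (p, p))) \<cdot>\<^sub>m diag_unit n p 0) $$ (i, j))
      \<in> lie_closure n S"
    by (rule lie_closure_sum) (auto intro: lie_closure.smult dest: units[OF _ assms(2)])
  ultimately show ?thesis
    by (subst traceless_hermitian_eq_sum_units[OF assms(1)]) (rule lie_closure.add)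
qed

lemma XX_op_commute: "XX_op N a c = XX_op N c a"
  by (simp add: XX_op_def flip_bit_commute)

lemma units_in_lie_closure_gen_set:
  assumes "p < 2 ^ N" "q < 2 ^ N" "p \<noteq> q"
  shows "sym_unit (2 ^ N) p q \<in> lie_closure (2 ^ N) (gen_set N)"
    and "asym_unit (2 ^ N) p q \<in> lie_closure (2 ^ N) (gen_set N)"
    and "diag_unit (2 ^ N) p q \<in> lie_closure (2 ^ N) (gen_set N)"
proof -
  let ?L = "lie_closure (2 ^ N) (gen_set N)"
  have gen: "X \<in> ?L" if "X \<in> gen_set N" for X
    using that gen_set_traceless_hermitian traceless_hermitianD(1) by (blast intro: lie_closure.gen)
  have Z: "Z_op N b \<in> ?L" if "b < N" for b
    using that by (intro gen) (auto simp: gen_set_eq)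
  have Y: "Y_op N b \<in> ?L" if "b < N" for b
    using Y_op_in_lie_closure[OF that Z[OF that]] gen by (simp add: gen_set_eq)
  have X: "X_op N b \<in> ?L" if "b < N" for b
    using X_op_in_lie_closure[OF that Z[OF that] Y[OF that]] .
  have ZZ: "ZZ_op N a c \<in> ?L" if "a \<noteq> c" "a < N" "c < N" for a c
  proof -
    have "yy_coupling N \<in> ?L"
      using that by (intro gen) (simp add: gen_set_eq)
    then have "XX_op N a c \<in> ?L"
      using that Z XX_op_in_lie_closure XX_op_commute by (metis linorder_neqE_nat)
    then show ?thesis
      using ZZ_op_in_lie_closure that Y by blast
  qed
  have "sym_unit (2 ^ N) p q \<in> ?L \<and> asym_unit (2 ^ N) p q \<in> ?L"
    using units_in_lie_closure_of_edges units_at_flip_bit_in_lie_closure[OF _ _ X Y ZZ] assms by blast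
  then show "sym_unit (2 ^ N) p q \<in> ?L" "asym_unit (2 ^ N) p q \<in> ?L"
    and "diag_unit (2 ^ N) p q \<in> ?L"
    using diag_unit_in_lie_closure assms by blast+
qed

theorem proposition1:
  fixes N :: nat
  assumes "N \<ge> 1"
  shows "lie_closure (2 ^ N) (gen_set N) = traceless_hermitian (2 ^ N)"
proof
  show "lie_closure (2 ^ N) (gen_set N) \<subseteq> traceless_hermitian (2 ^ N)"
    by (rule lie_closure_gen_set_subset)
  show "traceless_hermitian (2 ^ N) \<subseteq> lie_closure (2 ^ N) (gen_set N)"
  proof
    fix M assume "M \<in> traceless_hermitian (2 ^ N)"
    then show "M \<in> lie_closure (2 ^ N) (gen_set N)"
      by (rule traceless_hermitian_in_lie_closure) (simp_all add: units_in_lie_closure_gen_set)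
  qed
qed

end
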